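(* Under the setting of the following context, if $\mathbf{E}:=[e_k(x_j)]_{j,k=1}^n$ is nonsingular, then $$\mathcal{E}(\mathcal{S}_{\mathcal{X}})-\mathcal{E}(\mathcal{S}_T)\le 2K_\Omega\sqrt{1-\frac{1}{\lambda_{\max}\big(K[\mathcal{X}]^T(\mathbf{E}\mathbf{E}^* )^{-1}\big)}}.$$
   Context: $X$ is a metric space, $K$ a reproducing kernel on $X$ with RKHS $\mathcal{H}_K$ (so $f(x)=(f,K(x,\cdot))_{\mathcal{H}_K}$), $\Omega\subseteq X$ compact with $K$ continuous on $\Omega\times\Omega$, $\mu$ a finite positive Borel measure on $\Omega$, $K_\Omega:=\int_\Omega K(t,t)\,d\mu(t)$, and for a closed subspace $V$ of $\mathcal{H}_K$, $\mathcal{E}(V):=\int_\Omega\operatorname{dist}^2(K(t,\cdot),V)\,d\mu(t)$. $T$ is the positive compact operator on $\mathcal{H}_K$ given by $(Tf)(x)=\int_\Omega f(t)K(t,x)\,d\mu(t)$; $e_1,\dots,e_n$ are orthonormal eigenfunctions of $T$ for its $n$ largest eigenvalues, assumed positive; $\mathcal{S}_T=\operatorname{span}\{e_1,\dots,e_n\}$. $\mathcal{X}=\{x_1,\dots,x_n\}\subseteq X$ with $K[\mathcal{X}]=[K(x_j,x_k)]_{j,k=1}^n$ nonsingular, $\mathcal{S}_{\mathcal{X}}=\operatorname{span}\{K(x_j,\cdot)\}$. With $f_j:=\sum_{k=1}^n\overline{e_k(x_j)}e_k$ and $h_j:=K(x_j,\cdot)-f_j$, the matrix $\mathbf{B}:=[(h_k,h_j)_{\mathcal{H}_K}]_{j,k=1}^n$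 is assumed nonsingular. $\lambda_{\max}$ denotes the largest eigenvalue, $M^T$ the transpose, $M^*$ the conjugate transpose. *)

theory Defs
  imports "HOL-Analysis.Analysis" "Jordan_Normal_Form.Schur_Decomposition"
begin

definition hnorm :: "(('a \<Rightarrow> complex) \<Rightarrow> ('a \<Rightarrow> complex) \<Rightarrow> complex) \<Rightarrow> ('a \<Rightarrow> complex) \<Rightarrow> real" where
  "hnorm ip f = sqrt (Re (ip f f))"

text \<open>(H, ip) is a reproducing kernel Hilbert space of complex-valued functions on the
  type 'a with reproducing kernel K; the inner product is linear in the first argument
  and f x = ip f (K x) where K x denotes the function K(x,.).\<close>
definition is_rkhs ::
  "('a \<Rightarrow> 'a \<Rightarrow> complex) \<Rightarrow> ('a \<Rightarrow> complex) set \<Rightarrow>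
   (('a \<Rightarrow> complex) \<Rightarrow> ('a \<Rightarrow> complex) \<Rightarrow> complex) \<Rightarrow> bool" where
  "is_rkhs K H ip \<longleftrightarrow>
     (\<lambda>_. 0) \<in> H \<and>
     (\<forall>f\<in>H. \<forall>g\<in>H. (\<lambda>x. f x + g x) \<in> H) \<and>
     (\<forall>c. \<forall>f\<in>H. (\<lambda>x. c * f x) \<in> H) \<and>
     (\<forall>f\<in>H. \<forall>g\<in>H. \<forall>h\<in>H. ip (\<lambda>x. f x + g x) h = ip f h + ip g h) \<and>
     (\<forall>c. \<forall>f\<in>H. \<forall>g\<in>H. ip (\<lambda>x. c * f x) g = c * ip f g) \<and>
     (\<forall>f\<in>H. \<forall>g\<in>H. ip g f = cnj (ip f g)) \<and>
     (\<forall>f\<in>H. 0 \<le> Re (ip f f)) \<and>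
     (\<forall>f\<in>H. ip f f = 0 \<longrightarrow> f = (\<lambda>_. 0)) \<and>
     (\<forall>s. (\<forall>n. s n \<in> H) \<and>
          (\<forall>e>0. \<exists>N. \<forall>m\<ge>N. \<forall>n\<ge>N. hnorm ip (s m - s n) < e) \<longrightarrow>
          (\<exists>g\<in>H. (\<lambda>n. hnorm ip (s n - g)) \<longlonglongrightarrow> 0)) \<and>
     (\<forall>x. K x \<in> H) \<and>
     (\<forall>f\<in>H. \<forall>x. f x = ip f (K x))"

definition fspan :: "nat \<Rightarrow> (nat \<Rightarrow> 'a \<Rightarrow> complex) \<Rightarrow> ('a \<Rightarrow> complex) set" where
  "fspan n v = {(\<lambda>y. \<Sum>k<n. c k * v k y) | c. True}"

definition hdist :: "(('a \<Rightarrow> complex) \<Rightarrow> ('a \<Rightarrow> complex) \<Rightarrow> complex) \<Rightarrow> ('a \<Rightarrow> complex) \<Rightarrow> ('a \<Rightarrow> complex) set \<Rightarrow> real" where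
  "hdist ip f V = Inf ((\<lambda>v. hnorm ip (f - v)) ` V)"

definition approx_err :: "'a measure \<Rightarrow> ('a \<Rightarrow> 'a \<Rightarrow> complex) \<Rightarrow>
   (('a \<Rightarrow> complex) \<Rightarrow> ('a \<Rightarrow> complex) \<Rightarrow> complex) \<Rightarrow> ('a \<Rightarrow> complex) set \<Rightarrow> real" where
  "approx_err \<mu> K ip V = (\<integral>t. (hdist ip (K t) V)\<^sup>2 \<partial>\<mu>)"

definition intop :: "'a measure \<Rightarrow> ('a \<Rightarrow> 'a \<Rightarrow> complex) \<Rightarrow> ('a \<Rightarrow> complex) \<Rightarrow> 'a \<Rightarrow> complex" where
  "intop \<mu> K f x = (\<integral>t. f t * K t x \<partial>\<mu>)"

definition lambda_max :: "complex mat \<Rightarrow> real" where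
  "lambda_max A = Max {r::real. eigenvalue A (complex_of_real r)}"

definition mat_inv :: "complex mat \<Rightarrow> complex mat" where
  "mat_inv A = (THE B. B \<in> carrier_mat (dim_row A) (dim_row A) \<and> inverts_mat A B \<and> inverts_mat B A)"

end

theory Submission
  imports Defs
begin

(* Write S_X for the span of the kernel translates K(x_j,.) and S_T for the span of the
   orthonormal functions e_l, P for the orthogonal projection onto S_T and
   \<lambda> = \<lambda>_max(K[X]^T (E E^H)^{-1}).  In particular \<lambda> \<ge> 1.
   (2) For z orthogonal to S_X this gives ||P z||^2 \<le> (1 - 1/\<lambda>) ||z||^2.
   (3) Pointwise estimate: splitting k = v + z with v the projection onto S_X,
       dist^2(k,S_X) - dist^2(k,S_T) \<le> 2 sqrt(1 - 1/\<lambda>) ||k||^2.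
   (4) Applying (3) to k = K(t,.) (with ||K(t,.)||^2 = K(t,t)) and integrating over \<Omega>;
       integrability follows from continuity of t \<mapsto> dist(K(t,.),V) on the compact \<Omega>. *)

lemma mat_inv_inverse:
  assumes A: "(A::complex mat) \<in> carrier_mat n n" and d: "det A \<noteq> 0"
  shows "mat_inv A \<in> carrier_mat n n \<and> mat_inv A * A = 1\<^sub>m n \<and> A * mat_inv A = 1\<^sub>m n"
proof -
  have "A \<in> Units (ring_mat TYPE(complex) n ())" by (rule det_non_zero_imp_unit[OF A d])
  then obtain B where B: "B \<in> carrier_mat n n" "B * A = 1\<^sub>m n" "A * B = 1\<^sub>m n"
    by (auto simp: Units_def ring_mat_def)
  have "mat_inv A = B" unfolding mat_inv_def
  proof (rule the_equality)
    show "B \<in> carrier_mat (dim_row A) (dim_row A) \<and> inverts_mat A B \<and> inverts_mat B A"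
      using A B by (auto simp: inverts_mat_def)
  next
    fix C assume "C \<in> carrier_mat (dim_row A) (dim_row A) \<and> inverts_mat A C \<and> inverts_mat C A"
    hence C: "C \<in> carrier_mat n n" "A * C = 1\<^sub>m n" using A by (auto simp: inverts_mat_def)
    have "C = (B * A) * C" using C by (simp add: B(2))
    also have "\<dots> = B * (A * C)" by (rule assoc_mult_mat[OF B(1) A C(1)])
    finally show "C = B" using C B by simp
  qed
  thus ?thesis using B by simp
qed

lemma nonsingular_system_solvable:
  fixes A :: "nat \<Rightarrow> nat \<Rightarrow> complex"
  assumes "det (mat n n (\<lambda>(i, j). A i j)) \<noteq> 0"
  shows "\<exists>c. \<forall>i<n. (\<Sum>j<n. A i j * c j) = b i"
proof -
  define M where "M = mat n n (\<lambda>(i, j). A i j)"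
  have M: "M \<in> carrier_mat n n" by (simp add: M_def)
  define c where "c = mat_inv M *\<^sub>v vec n b"
  have inv: "mat_inv M \<in> carrier_mat n n" "M * mat_inv M = 1\<^sub>m n"
    using mat_inv_inverse[OF M assms[folded M_def]] by auto
  have "M *\<^sub>v c = (M * mat_inv M) *\<^sub>v vec n b"
    unfolding c_def using M inv by (subst assoc_mult_mat_vec) auto
  hence Mc: "M *\<^sub>v c = vec n b" using inv by simp
  have "(\<Sum>j<n. A i j * c $ j) = b i" if i: "i < n" for i
  proof -
    have "(M *\<^sub>v c) $ i = (\<Sum>j<n. A i j * c $ j)"
      using i inv by (simp add: M_def c_def scalar_prod_def row_def lessThan_atLeast0)
    thus ?thesis using Mc i by simp
  qed
  thus ?thesis by blast
qed

lemma nonsingular_system_injective: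
  fixes A :: "nat \<Rightarrow> nat \<Rightarrow> complex"
  assumes "det (mat n n (\<lambda>(i, j). A i j)) \<noteq> 0"
    and "\<forall>i<n. (\<Sum>j<n. A i j * c j) = 0"
  shows "\<forall>j<n. c j = 0"
proof -
  define M where "M = mat n n (\<lambda>(i, j). A i j)"
  have M: "M \<in> carrier_mat n n" by (simp add: M_def)
  have "M *\<^sub>v vec n c = 0\<^sub>v n"
    using assms(2) by (auto simp: M_def scalar_prod_def row_def lessThan_atLeast0)
  hence "vec n c = 0\<^sub>v n"
    using det_0_iff_vec_prod_zero_field[OF M] assms(1) by (metis M_def vec_carrier)
  thus ?thesis by (metis index_vec index_zero_vec(1))
qed

lemma det_transposed_mat:
  "det (mat n n (\<lambda>(i, j). A j i)) = det (mat n n (\<lambda>(i, j). A i j))"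
proof -
  have "mat n n (\<lambda>(i, j). A j i) = transpose_mat (mat n n (\<lambda>(i, j). A i j))"
    by (auto simp: transpose_mat_def)
  thus ?thesis using det_transpose[of "mat n n (\<lambda>(i, j). A i j)" n] by simp
qed

lemma adjoint_carrier: "A \<in> carrier_mat n n \<Longrightarrow> mat_adjoint A \<in> carrier_mat n n"
  unfolding mat_adjoint_def by (rule carrier_matI) simp_all

lemma adjoint_index:
  "A \<in> carrier_mat n n \<Longrightarrow> i < n \<Longrightarrow> j < n \<Longrightarrow> mat_adjoint A $$ (i, j) = cnj (A $$ (j, i))"
  by (simp add: mat_adjoint_def mat_of_rows_def)

lemma adjoint_mult_vec_index:
  fixes A :: "complex mat" and v :: "complex vec"
  assumes "A \<in> carrier_mat n n" "v \<in> carrier_vec n" "l < n"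
  shows "(mat_adjoint A *\<^sub>v v) $ l = (\<Sum>j<n. cnj (A $$ (j, l)) * v $ j)"
  using assms adjoint_carrier[OF assms(1)]
  by (auto simp: scalar_prod_def row_def lessThan_atLeast0 adjoint_index intro!: sum.cong)

lemma adjoint_kernel_trivial:
  fixes A :: "complex mat" and v :: "complex vec"
  assumes A: "A \<in> carrier_mat n n" "det A \<noteq> 0"
    and v: "v \<in> carrier_vec n" "mat_adjoint A *\<^sub>v v = 0\<^sub>v n"
  shows "v = 0\<^sub>v n"
proof -
  have "(\<Sum>j<n. A $$ (j, l) * cnj (v $ j)) = cnj ((mat_adjoint A *\<^sub>v v) $ l)" if "l < n" for l
    using that adjoint_mult_vec_index[OF A(1) v(1) that] by (simp add: mult.commute)
  hence ker: "\<forall>l<n. (\<Sum>j<n. A $$ (j, l) * cnj (v $ j)) = 0" using v(2) by simp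
  have "mat n n (\<lambda>(l, j). A $$ (j, l)) = transpose_mat A"
    using A(1) by (auto simp: transpose_mat_def)
  hence "det (mat n n (\<lambda>(l, j). A $$ (j, l))) \<noteq> 0" using A det_transpose[OF A(1)] by simp
  from nonsingular_system_injective[OF this ker] have "\<forall>j<n. cnj (v $ j) = 0" .
  thus ?thesis using v(1) by (intro eq_vecI) auto
qed

lemma det_mult_adjoint_nonzero:
  fixes A :: "complex mat"
  assumes A: "A \<in> carrier_mat n n" "det A \<noteq> 0"
  shows "det (A * mat_adjoint A) \<noteq> 0"
proof
  have AA: "A * mat_adjoint A \<in> carrier_mat n n"
    using mult_carrier_mat[OF A(1) adjoint_carrier[OF A(1)]] .
  assume "det (A * mat_adjoint A) = 0"
  then obtain v where v: "v \<in> carrier_vec n" "v \<noteq> 0\<^sub>v n" "(A * mat_adjoint A) *\<^sub>v v = 0\<^sub>v n"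
    using det_0_iff_vec_prod_zero_field[OF AA] by blast
  have "A *\<^sub>v (mat_adjoint A *\<^sub>v v) = 0\<^sub>v n"
    using v(3) assoc_mult_mat_vec[OF A(1) adjoint_carrier[OF A(1)] v(1)] by simp
  moreover have "mat_adjoint A *\<^sub>v v \<in> carrier_vec n" using adjoint_carrier[OF A(1)] v(1) by simp
  ultimately have "mat_adjoint A *\<^sub>v v = 0\<^sub>v n"
    using det_0_iff_vec_prod_zero_field[OF A(1)] A(2) by blast
  thus False using adjoint_kernel_trivial[OF A v(1)] v(2) by simp
qed

text \<open>A square matrix has finitely many real eigenvalues (roots of its characteristic
  polynomial), so every real eigenvalue is bounded by lambda_max.\<close>
lemma eigenvalue_le_lambda_max:
  assumes M: "(M::complex mat) \<in> carrier_mat n n" and r: "eigenvalue M (complex_of_real r)"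
  shows "r \<le> lambda_max M"
proof -
  have "char_poly M \<noteq> 0" using degree_monic_char_poly[OF M] by auto
  hence "finite (complex_of_real -` {k. poly (char_poly M) k = 0})"
    by (intro finite_vimageI poly_roots_finite) (simp_all add: inj_of_real)
  moreover have "{r::real. eigenvalue M (complex_of_real r)}
      = complex_of_real -` {k. poly (char_poly M) k = 0}"
    using eigenvalue_root_char_poly[OF M] by auto
  ultimately have "finite {r::real. eigenvalue M (complex_of_real r)}" by simp
  thus ?thesis unfolding lambda_max_def by (rule Max_ge) (simp add: r)
qed


section \<open>Maximising a Rayleigh quotient over coefficient vectors\<close>

definition coef_sphere :: "nat \<Rightarrow> (nat \<Rightarrow> complex) set" where
  "coef_sphere n = {c. (\<forall>j. n \<le> j \<longrightarrow> c j = 0) \<and> (\<Sum>j<n. (cmod (c j))\<^sup>2) = 1}"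

lemma cont_coord [continuous_intros]: "continuous_on S (\<lambda>c::nat \<Rightarrow> complex. c j)"
  by (rule continuous_on_subset[OF continuous_on_product_coordinates]) simp

text \<open>The unit sphere is a closed subset of a product of compact discs, hence compact.\<close>
lemma compact_coef_sphere: "compact (coef_sphere n)"
proof -
  define B where "B = (\<lambda>j::nat. if j < n then cball (0::complex) 1 else {0})"
  have "compactin (product_topology (\<lambda>_. euclidean) UNIV) (PiE UNIV B)"
    by (subst compactin_PiE) (auto simp: B_def)
  hence box: "compact (PiE UNIV B)" by (simp add: euclidean_product_topology)
  have closed: "closed {c :: nat \<Rightarrow> complex. (\<Sum>j<n. (cmod (c j))\<^sup>2) = 1}"
    by (rule closed_Collect_eq) (auto intro!: continuous_intros)
  have bounded: "cmod (c j) \<le> 1" if "c \<in> coef_sphere n" "j < n" for c j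
  proof -
    have "(cmod (c j))\<^sup>2 \<le> (\<Sum>j<n. (cmod (c j))\<^sup>2)" by (rule member_le_sum) (use that in auto)
    hence "(cmod (c j))\<^sup>2 \<le> 1\<^sup>2" using that by (simp add: coef_sphere_def)
    thus ?thesis by (metis norm_ge_zero one_power2 power2_le_imp_le zero_le_one)
  qed
  have "coef_sphere n = PiE UNIV B \<inter> {c. (\<Sum>j<n. (cmod (c j))\<^sup>2) = 1}"
    using bounded by (auto simp: coef_sphere_def B_def PiE_iff split: if_splits)
  thus ?thesis using box closed by (simp add: compact_Int_closed)
qed

lemma coef_sphere_nonzero: "c \<in> coef_sphere n \<Longrightarrow> \<exists>j<n. c j \<noteq> 0"
  by (rule ccontr) (simp add: coef_sphere_def)

lemma coef_sphere_normalize: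
  assumes "\<exists>j<n. c j \<noteq> 0"
  obtains t c' where "t \<noteq> 0" "c' \<in> coef_sphere n"
    "(\<lambda>j. if j < n then c j else 0) = (\<lambda>j. complex_of_real t * c' j)"
proof -
  define s where "s = (\<Sum>j<n. (cmod (c j))\<^sup>2)"
  obtain j where j: "j < n" "c j \<noteq> 0" using assms by blast
  have "0 < (cmod (c j))\<^sup>2" using j by simp
  also have "\<dots> \<le> s" unfolding s_def by (rule member_le_sum) (use j in auto)
  finally have s0: "0 < s" .
  define c' where "c' = (\<lambda>j. if j < n then c j / complex_of_real (sqrt s) else 0)"
  have "(\<Sum>j<n. (cmod (c' j))\<^sup>2) = (\<Sum>j<n. (cmod (c j))\<^sup>2 / s)"
    using s0 by (intro sum.cong) (auto simp: c'_def norm_divide power_divide)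
  also have "\<dots> = 1" using s0 by (simp add: s_def[symmetric] sum_divide_distrib[symmetric])
  finally have "c' \<in> coef_sphere n" by (auto simp: coef_sphere_def c'_def)
  moreover have "(\<lambda>j. if j < n then c j else 0) = (\<lambda>j. complex_of_real (sqrt s) * c' j)"
    using s0 by (auto simp: c'_def)
  ultimately show ?thesis using that[of "sqrt s" c'] s0 by simp
qed

lemma rayleigh_max:
  fixes F P :: "(nat \<Rightarrow> complex) \<Rightarrow> real" and n :: nat
  assumes n: "0 < n"
    and contF: "continuous_on UNIV F" and contP: "continuous_on UNIV P"
    and Ppos: "\<And>c. \<exists>j<n. c j \<noteq> 0 \<Longrightarrow> P c > 0"
    and scF: "\<And>c t. F (\<lambda>j. of_real t * c j) = t\<^sup>2 * F c"
    and scP: "\<And>c t. P (\<lambda>j. of_real t * c j) = t\<^sup>2 * P c"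
    and depF: "\<And>c. F c = F (\<lambda>j. if j < n then c j else 0)"
    and depP: "\<And>c. P c = P (\<lambda>j. if j < n then c j else 0)"
  shows "\<exists>c0 r. (\<exists>j<n. c0 j \<noteq> 0) \<and> F c0 = r * P c0 \<and> (\<forall>c. F c \<le> r * P c)"
proof -
  have "(\<Sum>j<n. (cmod (if j = 0 then 1 else (0::complex)))\<^sup>2) = (\<Sum>j<n. if j = 0 then 1 else 0)"
    by (rule sum.cong) auto
  hence "(\<lambda>j. if j = 0 then 1 else (0::complex)) \<in> coef_sphere n"
    using n by (auto simp: coef_sphere_def)
  hence ne: "coef_sphere n \<noteq> {}" by blast
  have "continuous_on (coef_sphere n) (\<lambda>c. F c / P c)"
    by (intro continuous_on_divide continuous_on_subset[OF contF] continuous_on_subset[OF contP])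
       (auto dest!: coef_sphere_nonzero Ppos)
  then obtain c0 where c0: "c0 \<in> coef_sphere n"
    and mx: "\<forall>c\<in>coef_sphere n. F c / P c \<le> F c0 / P c0"
    using continuous_attains_sup[OF compact_coef_sphere ne] by blast
  define r where "r = F c0 / P c0"
  have P0: "P c0 > 0" using Ppos coef_sphere_nonzero[OF c0] by blast
  have "F c \<le> r * P c" for c
  proof (cases "\<exists>j<n. c j \<noteq> 0")
    case False
    hence "(\<lambda>j. if j < n then c j else 0) = (\<lambda>j. of_real 0 * c j)" by auto
    hence "F c = 0" "P c = 0" using depF[of c] depP[of c] scF[of 0 c] scP[of 0 c] by simp_all
    thus ?thesis by simp
  next
    case True
    then obtain t c' where t: "t \<noteq> 0" "c' \<in> coef_sphere n"
      and c: "(\<lambda>j. if j < n then c j else 0) = (\<lambda>j. of_real t * c' j)"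
      by (rule coef_sphere_normalize)
    have "F c = t\<^sup>2 * F c'" "P c = t\<^sup>2 * P c'" using depF[of c] depP[of c] by (simp_all add: c scF scP)
    moreover have "F c' \<le> r * P c'"
    proof -
      have "F c' / P c' \<le> r" using mx t(2) r_def by blast
      thus ?thesis using Ppos[OF coef_sphere_nonzero[OF t(2)]] by (simp add: divide_le_eq)
    qed
    ultimately show ?thesis by (metis mult.left_commute mult_left_mono zero_le_power2)
  qed
  moreover have "F c0 = r * P c0" using P0 by (simp add: r_def)
  ultimately show ?thesis using coef_sphere_nonzero[OF c0] by blast
qed

lemma nonneg_quadratic_imp_zero:
  fixes X :: complex and q :: real
  assumes nonneg: "\<And>a. 0 \<le> Re (cnj a * X + a * cnj X) + (cmod a)\<^sup>2 * q"
  shows "X = 0"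
proof -
  define t where "t = 1 / (\<bar>q\<bar> + 1)"
  have t0: "0 < t" and tq: "t * q < 1" by (auto simp: t_def field_simps)
  have "Re (cnj a * X + a * cnj X) = - 2 * t * (cmod X)\<^sup>2" if "a = - (of_real t * X)" for a
  proof -
    have "cnj a * X + a * cnj X = - of_real (2 * t) * (X * cnj X)" using that by (simp add: algebra_simps)
    thus ?thesis by (simp only: complex_norm_square[symmetric] of_real_mult[symmetric]
          of_real_minus[symmetric] Re_complex_of_real)
  qed
  moreover have "(cmod (- (of_real t * X)))\<^sup>2 = t\<^sup>2 * (cmod X)\<^sup>2"
    using t0 by (simp add: norm_mult power_mult_distrib)
  ultimately have "0 \<le> t * (cmod X)\<^sup>2 * (t * q - 2)"
    using nonneg[of "- (of_real t * X)"] by (simp add: power2_eq_square algebra_simps)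
  hence "t * (cmod X)\<^sup>2 \<le> 0" using tq by (simp add: mult_le_0_iff zero_le_mult_iff)
  thus ?thesis using t0 by (simp add: mult_le_0_iff)
qed


locale rkhs_space =
  fixes K :: "'a \<Rightarrow> 'a \<Rightarrow> complex" and H :: "('a \<Rightarrow> complex) set"
    and ip :: "('a \<Rightarrow> complex) \<Rightarrow> ('a \<Rightarrow> complex) \<Rightarrow> complex"
  assumes rkhs: "is_rkhs K H ip"
begin

lemma zero_in: "(\<lambda>_. 0) \<in> H" using rkhs unfolding is_rkhs_def by blast
lemma add_in: "f \<in> H \<Longrightarrow> g \<in> H \<Longrightarrow> (\<lambda>x. f x + g x) \<in> H" using rkhs unfolding is_rkhs_def by blast
lemma scale_in: "f \<in> H \<Longrightarrow> (\<lambda>x. c * f x) \<in> H" using rkhs unfolding is_rkhs_def by blast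
lemma ip_add: "f \<in> H \<Longrightarrow> g \<in> H \<Longrightarrow> h \<in> H \<Longrightarrow> ip (\<lambda>x. f x + g x) h = ip f h + ip g h"
  using rkhs unfolding is_rkhs_def by blast
lemma ip_scale: "f \<in> H \<Longrightarrow> g \<in> H \<Longrightarrow> ip (\<lambda>x. c * f x) g = c * ip f g"
  using rkhs unfolding is_rkhs_def by blast
lemma ip_sym: "f \<in> H \<Longrightarrow> g \<in> H \<Longrightarrow> ip g f = cnj (ip f g)"
  using rkhs unfolding is_rkhs_def by blast
lemma ip_pos: "f \<in> H \<Longrightarrow> 0 \<le> Re (ip f f)"
  using rkhs unfolding is_rkhs_def by blast
lemma K_in: "K y \<in> H" using rkhs unfolding is_rkhs_def by blast
lemma repr: "f \<in> H \<Longrightarrow> f y = ip f (K y)" using rkhs unfolding is_rkhs_def by blast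

lemma ip_K_K: "ip (K a) (K b) = K a b" using repr[OF K_in, of a b] by simp

lemma ip_K_left: assumes "f \<in> H" shows "ip (K y) f = cnj (f y)"
  using ip_sym[OF assms K_in] repr[OF assms, of y] by simp

definition lin :: "('a \<Rightarrow> complex) \<Rightarrow> complex \<Rightarrow> ('a \<Rightarrow> complex) \<Rightarrow> 'a \<Rightarrow> complex" where
  "lin f a g = (\<lambda>x. f x + a * g x)"

lemma lin_in: "f \<in> H \<Longrightarrow> g \<in> H \<Longrightarrow> lin f a g \<in> H"
  unfolding lin_def by (rule add_in, assumption, rule scale_in)

lemma ip_lin: "f \<in> H \<Longrightarrow> g \<in> H \<Longrightarrow> h \<in> H \<Longrightarrow> ip (lin f a g) h = ip f h + a * ip g h"
  unfolding lin_def by (subst ip_add, assumption, rule scale_in, assumption+) (simp add: ip_scale)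

lemma ip_lin_r:
  assumes "f \<in> H" "g \<in> H" "h \<in> H" shows "ip h (lin f a g) = ip h f + cnj a * ip h g"
proof -
  have "ip h (lin f a g) = cnj (ip (lin f a g) h)" using assms lin_in ip_sym by blast
  also have "\<dots> = cnj (ip f h) + cnj a * cnj (ip g h)" using assms by (simp add: ip_lin)
  finally show ?thesis using assms ip_sym by metis
qed

lemma ip_lin_lin:
  assumes "f \<in> H" "g \<in> H"
  shows "ip (lin f a g) (lin f a g) = ip f f + cnj a * ip f g + a * ip g f + a * cnj a * ip g g"
  using assms by (simp add: ip_lin ip_lin_r lin_in algebra_simps)

lemma minus_lin: "f - g = lin f (-1) g" by (simp add: lin_def fun_eq_iff)

lemma minus_in: "f \<in> H \<Longrightarrow> g \<in> H \<Longrightarrow> f - g \<in> H"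
  by (simp add: minus_lin lin_in)

lemma ip_minus: "f \<in> H \<Longrightarrow> g \<in> H \<Longrightarrow> h \<in> H \<Longrightarrow> ip (f - g) h = ip f h - ip g h"
  by (simp add: minus_lin ip_lin)

lemma ip_minus_r: "f \<in> H \<Longrightarrow> g \<in> H \<Longrightarrow> h \<in> H \<Longrightarrow> ip h (f - g) = ip h f - ip h g"
  by (simp add: minus_lin ip_lin_r)

lemma ip_real: "f \<in> H \<Longrightarrow> ip f f = complex_of_real (Re (ip f f))"
  using ip_sym[of f f] by (simp add: complex_eq_iff)

lemma sum_Suc_lin: "(\<lambda>y. \<Sum>k<Suc n. c k * v k y) = lin (\<lambda>y. \<Sum>k<n. c k * v k y) (c n) (v n)"
  by (simp add: lin_def)

lemma sum_in: "(\<And>k::nat. k < n \<Longrightarrow> v k \<in> H) \<Longrightarrow> (\<lambda>y. \<Sum>k<n. c k * v k y) \<in> H"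
proof (induction n)
  case 0 thus ?case using zero_in by simp
next
  case (Suc n)
  show ?case unfolding sum_Suc_lin by (rule lin_in) (use Suc in auto)
qed

lemma ip_sum:
  "(\<And>k::nat. k < n \<Longrightarrow> v k \<in> H) \<Longrightarrow> g \<in> H \<Longrightarrow>
   ip (\<lambda>y. \<Sum>k<n. c k * v k y) g = (\<Sum>k<n. c k * ip (v k) g)"
proof (induction n)
  case 0 thus ?case using ip_scale[OF zero_in, of g 0] by simp
next
  case (Suc n)
  have "(\<lambda>y. \<Sum>k<n. c k * v k y) \<in> H" by (rule sum_in) (use Suc in auto)
  thus ?case unfolding sum_Suc_lin using Suc by (simp add: ip_lin)
qed

lemma ip_sum_r:
  assumes "\<And>k::nat. k < n \<Longrightarrow> v k \<in> H" "g \<in> H"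
  shows "ip g (\<lambda>y. \<Sum>k<n. c k * v k y) = (\<Sum>k<n. cnj (c k) * ip g (v k))"
proof -
  have "ip g (\<lambda>y. \<Sum>k<n. c k * v k y) = cnj (ip (\<lambda>y. \<Sum>k<n. c k * v k y) g)"
    using assms sum_in ip_sym by blast
  also have "\<dots> = (\<Sum>k<n. cnj (c k) * cnj (ip (v k) g))" using assms by (simp add: ip_sum)
  also have "\<dots> = (\<Sum>k<n. cnj (c k) * ip g (v k))"
    by (intro sum.cong refl) (metis assms ip_sym lessThan_iff)
  finally show ?thesis .
qed

lemma cauchy_schwarz:
  assumes f: "f \<in> H" and g: "g \<in> H"
  shows "(cmod (ip f g))\<^sup>2 \<le> Re (ip f f) * Re (ip g g)"
proof (cases "Re (ip g g) = 0")
  case True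
  hence gg: "ip g g = 0" using ip_real[OF g] by (metis of_real_0)
  have "0 \<le> Re (ip (lin f (- (of_real t * ip f g)) g) (lin f (- (of_real t * ip f g)) g))" for t
    using ip_pos f g lin_in by blast
  hence "0 \<le> Re (ip f f) - 2 * t * ((Re (ip f g))\<^sup>2 + (Im (ip f g))\<^sup>2)" for t
    unfolding ip_lin_lin[OF f g] using gg ip_sym[OF f g]
    by (simp add: power2_eq_square algebra_simps)
  hence "0 \<le> Re (ip f f) - 2 * t * (cmod (ip f g))\<^sup>2" for t by (simp add: cmod_power2)
  from this[of "(Re (ip f f) + 1) / (2 * (cmod (ip f g))\<^sup>2)"]
  have "(cmod (ip f g))\<^sup>2 = 0" using ip_pos[OF f]
    by (cases "(cmod (ip f g))\<^sup>2 = 0") (auto simp: field_simps)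
  thus ?thesis using True by simp
next
  case False
  define r where "r = Re (ip g g)"
  define p where "p = ip f g"
  have r0: "r > 0" using False ip_pos[OF g] by (simp add: r_def)
  have gg: "ip g g = of_real r" using ip_real[OF g] by (simp add: r_def)
  define a where "a = p / of_real r"
  have "ip (lin f (- a) g) (lin f (- a) g) = ip f f - cnj a * p - a * cnj p + a * cnj a * of_real r"
    unfolding ip_lin_lin[OF f g] ip_sym[OF f g] p_def using gg by simp
  also have "\<dots> = ip f f - p * cnj p / of_real r"
    unfolding a_def using r0 by (simp add: field_simps)
  also have "\<dots> = ip f f - of_real ((cmod p)\<^sup>2 / r)"
    by (simp only: complex_norm_square[symmetric] of_real_divide)
  finally have "0 \<le> Re (ip f f) - (cmod p)\<^sup>2 / r"
    using ip_pos[OF lin_in[OF f g, of "- a"]] by simp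
  thus ?thesis using r0 by (simp add: field_simps p_def r_def)
qed

definition nsq :: "('a \<Rightarrow> complex) \<Rightarrow> real" where "nsq f = Re (ip f f)"

lemma nsq_nonneg: "f \<in> H \<Longrightarrow> 0 \<le> nsq f" by (simp add: nsq_def ip_pos)

lemma hnorm_nsq: "hnorm ip f = sqrt (nsq f)" by (simp add: hnorm_def nsq_def)

lemma nsq_K: "nsq (K t) = Re (K t t)" by (simp add: nsq_def ip_K_K)

lemma nsq_K_diff: "nsq (K t - K s) = Re (K t t - K t s - K s t + K s s)"
  by (simp add: nsq_def ip_minus ip_minus_r minus_in K_in ip_K_K)

lemma pythagoras:
  assumes "f \<in> H" "g \<in> H" "ip (f - g) g = 0"
  shows "nsq f = nsq (f - g) + nsq g"
proof -
  have fg: "f - g \<in> H" using assms minus_in by blast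
  have f: "f = lin (f - g) 1 g" by (simp add: lin_def fun_eq_iff)
  have "ip g (f - g) = 0" using ip_sym[OF fg assms(2)] assms(3) by simp
  hence "ip f f = ip (f - g) (f - g) + ip g g"
    by (subst (1 2) f) (simp add: ip_lin_lin[OF fg assms(2)] assms(3))
  thus ?thesis by (simp add: nsq_def)
qed

lemma triangle:
  assumes "f \<in> H" "g \<in> H"
  shows "sqrt (nsq (lin f 1 g)) \<le> sqrt (nsq f) + sqrt (nsq g)"
proof -
  have "nsq (lin f 1 g) = nsq f + 2 * Re (ip f g) + nsq g"
    unfolding nsq_def ip_lin_lin[OF assms] using ip_sym[OF assms] by simp
  also have "Re (ip f g) \<le> cmod (ip f g)" by (rule complex_Re_le_cmod)
  also have "cmod (ip f g) \<le> sqrt (nsq f) * sqrt (nsq g)"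
    using cauchy_schwarz[OF assms] unfolding nsq_def
    by (metis norm_ge_zero real_le_rsqrt real_sqrt_mult)
  finally have "nsq (lin f 1 g) \<le> (sqrt (nsq f) + sqrt (nsq g))\<^sup>2"
    using nsq_nonneg[OF assms(1)] nsq_nonneg[OF assms(2)] by (simp add: power2_eq_square algebra_simps)
  thus ?thesis using nsq_nonneg[OF assms(1)] nsq_nonneg[OF assms(2)] real_le_lsqrt by fastforce
qed

lemma hdist_le:
  assumes "v \<in> V" "V \<subseteq> H" "f \<in> H" shows "hdist ip f V \<le> hnorm ip (f - v)"
  unfolding hdist_def
  by (rule cInf_lower) (use assms in \<open>auto intro!: bdd_belowI[of _ 0] simp: hnorm_def ip_pos minus_in subsetD\<close>)

lemma hdist_ge:
  assumes "V \<noteq> {}" "\<And>v. v \<in> V \<Longrightarrow> b \<le> hnorm ip (f - v)" shows "b \<le> hdist ip f V"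
  unfolding hdist_def by (rule cInf_greatest) (use assms in auto)

lemma hdist_nonneg: assumes "V \<noteq> {}" "V \<subseteq> H" "f \<in> H" shows "0 \<le> hdist ip f V"
  by (rule hdist_ge[OF assms(1)]) (use assms in \<open>auto simp: hnorm_def ip_pos minus_in subsetD\<close>)

lemma hdist_lipschitz:
  assumes V: "V \<noteq> {}" "V \<subseteq> H" and fg: "f \<in> H" "g \<in> H"
  shows "hdist ip f V \<le> hnorm ip (f - g) + hdist ip g V"
proof -
  have "hdist ip f V - hnorm ip (f - g) \<le> hdist ip g V"
  proof (rule hdist_ge[OF V(1)])
    fix v assume v: "v \<in> V"
    hence "v \<in> H" using V by auto
    moreover have "f - v = lin (f - g) 1 (g - v)" by (simp add: lin_def fun_eq_iff)
    ultimately have "hnorm ip (f - v) \<le> hnorm ip (f - g) + hnorm ip (g - v)"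
      using triangle[of "f - g" "g - v"] minus_in fg by (simp add: hnorm_nsq)
    thus "hdist ip f V - hnorm ip (f - g) \<le> hnorm ip (g - v)"
      using hdist_le[OF v V(2) fg(1)] by simp
  qed
  thus ?thesis by simp
qed

end


section \<open>Orthogonal projection onto the span of an orthonormal system\<close>

locale orthonormal_system = rkhs_space +
  fixes n :: nat and e :: "nat \<Rightarrow> 'a \<Rightarrow> complex"
  assumes e_in: "\<And>k. k < n \<Longrightarrow> e k \<in> H"
    and e_orth: "\<And>j k. j < n \<Longrightarrow> k < n \<Longrightarrow> ip (e j) (e k) = (if j = k then 1 else 0)"
begin

definition proj :: "('a \<Rightarrow> complex) \<Rightarrow> 'a \<Rightarrow> complex" where
  "proj f = (\<lambda>y. \<Sum>l<n. ip f (e l) * e l y)"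

definition bessel :: "('a \<Rightarrow> complex) \<Rightarrow> real" where
  "bessel f = (\<Sum>l<n. (cmod (ip f (e l)))\<^sup>2)"

lemma proj_in: "proj f \<in> H" unfolding proj_def by (rule sum_in) (simp add: e_in)

lemma span_e_sub: "fspan n e \<subseteq> H" by (auto simp: fspan_def intro!: sum_in e_in)
lemma span_e_ne: "fspan n e \<noteq> {}" by (auto simp: fspan_def)

lemma bessel_nonneg: "0 \<le> bessel f" by (simp add: bessel_def sum_nonneg)

lemma ip_proj_e: "l < n \<Longrightarrow> ip (proj f) (e l) = ip f (e l)"
  unfolding proj_def by (subst ip_sum) (auto simp: e_in e_orth if_distrib cong: if_cong)

lemma ip_proj_left: "g \<in> H \<Longrightarrow> ip (proj f) g = (\<Sum>l<n. ip f (e l) * cnj (ip g (e l)))"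
  unfolding proj_def by (subst ip_sum) (auto simp: e_in intro!: sum.cong ip_sym)

lemma Re_ip_proj: "h \<in> H \<Longrightarrow> Re (ip (proj h) h) = bessel h"
  unfolding ip_proj_left bessel_def
  by (simp add: complex_norm_square[symmetric] of_real_power[symmetric] del: of_real_power)

lemma proj_lin: "f \<in> H \<Longrightarrow> g \<in> H \<Longrightarrow> proj (lin f a g) = lin (proj f) a (proj g)"
  unfolding proj_def lin_def
  by (simp add: ip_lin[unfolded lin_def] e_in fun_eq_iff sum.distrib sum_distrib_left algebra_simps)

lemma proj_orth:
  assumes "f \<in> H" shows "ip (f - proj f) (\<lambda>y. \<Sum>l<n. a l * e l y) = 0"
proof -
  have "ip (f - proj f) (\<lambda>y. \<Sum>l<n. a l * e l y) = (\<Sum>l<n. cnj (a l) * ip (f - proj f) (e l))"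
    by (rule ip_sum_r) (simp_all add: e_in minus_in proj_in assms)
  also have "\<dots> = 0" by (simp add: ip_minus assms proj_in e_in ip_proj_e)
  finally show ?thesis .
qed

lemma proj_idem: "proj (proj f) = proj f"
proof -
  have "(\<lambda>y. \<Sum>l<n. ip (proj f) (e l) * e l y) = (\<lambda>y. \<Sum>l<n. ip f (e l) * e l y)"
    by (intro ext sum.cong refl) (simp add: ip_proj_e)
  thus ?thesis by (simp only: proj_def)
qed

lemma nsq_proj: "nsq (proj f) = bessel f"
  using Re_ip_proj[OF proj_in, of f] by (simp add: nsq_def proj_idem bessel_def ip_proj_e)

lemma nsq_split:
  assumes f: "f \<in> H" shows "nsq f = nsq (f - proj f) + bessel f"
proof -
  have "ip (f - proj f) (proj f) = 0"
    using proj_orth[OF f, of "\<lambda>l. ip f (e l)"] by (simp add: proj_def)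
  from pythagoras[OF f proj_in this] show ?thesis by (simp add: nsq_proj)
qed

lemma bessel_le_nsq: "f \<in> H \<Longrightarrow> bessel f \<le> nsq f"
  using nsq_split nsq_nonneg[OF minus_in[OF _ proj_in]] by fastforce

lemma best_approx_span_e:
  assumes f: "f \<in> H" and v: "v \<in> fspan n e" shows "nsq f - bessel f \<le> nsq (f - v)"
proof -
  obtain c where v: "v = (\<lambda>y. \<Sum>l<n. c l * e l y)" using v by (auto simp: fspan_def)
  have vH: "v \<in> H" unfolding v by (rule sum_in) (simp add: e_in)
  have d: "proj f - v = (\<lambda>y. \<Sum>l<n. (ip f (e l) - c l) * e l y)"
    by (simp add: proj_def v fun_eq_iff sum_subtractf algebra_simps)
  have dd: "(f - v) - (proj f - v) = f - proj f" by (simp add: fun_eq_iff)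
  have "nsq (f - v) = nsq ((f - v) - (proj f - v)) + nsq (proj f - v)"
    by (rule pythagoras) (simp_all add: minus_in f vH proj_in dd, simp add: d proj_orth f)
  thus ?thesis using nsq_split[OF f] nsq_nonneg[OF minus_in[OF proj_in vH]] by (simp add: dd)
qed

lemma hdist_span_e: "f \<in> H \<Longrightarrow> nsq f - bessel f \<le> (hdist ip f (fspan n e))\<^sup>2"
proof -
  assume f: "f \<in> H"
  have "sqrt (nsq f - bessel f) \<le> hdist ip f (fspan n e)"
    by (rule hdist_ge[OF span_e_ne]) (simp add: hnorm_nsq best_approx_span_e f)
  moreover have "0 \<le> nsq f - bessel f" using bessel_le_nsq[OF f] by simp
  ultimately show ?thesis by (metis real_sqrt_le_iff real_sqrt_pow2 sqrt_le_D)
qed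

end


locale interpolation_setting = orthonormal_system +
  fixes x :: "nat \<Rightarrow> 'a"
  assumes n_pos: "0 < n"
    and Gdet: "det (mat n n (\<lambda>(j, k). K (x j) (x k))) \<noteq> 0"
    and Edet: "det (mat n n (\<lambda>(j, k). e k (x j))) \<noteq> 0"
begin

definition kcomb :: "(nat \<Rightarrow> complex) \<Rightarrow> 'a \<Rightarrow> complex" where
  "kcomb c = (\<lambda>y. \<Sum>j<n. c j * K (x j) y)"

lemma kcomb_in: "kcomb c \<in> H" unfolding kcomb_def by (rule sum_in) (simp add: K_in)

lemma kcomb_in_span: "kcomb c \<in> fspan n (\<lambda>j. K (x j))" by (auto simp: fspan_def kcomb_def)

lemma span_x_sub: "fspan n (\<lambda>j. K (x j)) \<subseteq> H" by (auto simp: fspan_def intro!: sum_in K_in)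
lemma span_x_ne: "fspan n (\<lambda>j. K (x j)) \<noteq> {}" by (auto simp: fspan_def)

lemma ip_kcomb: "g \<in> H \<Longrightarrow> ip (kcomb c) g = (\<Sum>j<n. c j * ip (K (x j)) g)"
  unfolding kcomb_def by (rule ip_sum) (simp_all add: K_in)

lemma ip_kcomb_r: "f \<in> H \<Longrightarrow> ip f (kcomb c) = (\<Sum>j<n. cnj (c j) * ip f (K (x j)))"
  unfolding kcomb_def by (rule ip_sum_r) (simp_all add: K_in)

lemma ip_kcomb_e: "l < n \<Longrightarrow> ip (kcomb c) (e l) = (\<Sum>j<n. c j * cnj (e l (x j)))"
  by (simp add: ip_kcomb e_in ip_K_left)

lemma kcomb_lin: "kcomb (\<lambda>j. c j + a * d j) = lin (kcomb c) a (kcomb d)"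
  by (simp add: kcomb_def lin_def fun_eq_iff sum.distrib sum_distrib_left algebra_simps)

lemma kcomb_unit: "i < n \<Longrightarrow> kcomb (\<lambda>j. if j = i then 1 else 0) = K (x i)"
proof (rule ext)
  fix y assume "i < n"
  have "(\<Sum>j<n. (if j = i then 1 else 0) * K (x j) y) = (\<Sum>j<n. if j = i then K (x j) y else 0)"
    by (rule sum.cong) auto
  thus "kcomb (\<lambda>j. if j = i then 1 else 0) y = K (x i) y" using \<open>i < n\<close> by (simp add: kcomb_def)
qed

lemma det_kernel_matrix_transposed: "det (mat n n (\<lambda>(i, j). K (x j) (x i))) \<noteq> 0"
  using Gdet det_transposed_mat[of n "\<lambda>j k. K (x j) (x k)"] by simp

lemma det_eval_matrix_transposed: "det (mat n n (\<lambda>(l, j). e l (x j))) \<noteq> 0"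
  using Edet det_transposed_mat[of n "\<lambda>j k. e k (x j)"] by simp

text \<open>Since K[X] is nonsingular, every f has an orthogonal projection onto S_X.\<close>
lemma proj_span_x_exists: "f \<in> H \<Longrightarrow> \<exists>c. \<forall>d. ip (f - kcomb c) (kcomb d) = 0"
proof -
  assume f: "f \<in> H"
  obtain c where c: "\<forall>i<n. (\<Sum>j<n. K (x j) (x i) * c j) = f (x i)"
    using nonsingular_system_solvable[OF det_kernel_matrix_transposed, of "\<lambda>i. f (x i)"] by blast
  have "ip (f - kcomb c) (K (x i)) = 0" if "i < n" for i
  proof -
    have "ip (f - kcomb c) (K (x i)) = f (x i) - (\<Sum>j<n. c j * K (x j) (x i))"
      using f repr[OF f, of "x i"] by (simp add: ip_minus kcomb_in K_in ip_kcomb ip_K_K)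
    thus ?thesis using c that by (simp add: mult.commute)
  qed
  hence "ip (f - kcomb c) (kcomb d) = 0" for d by (simp add: ip_kcomb_r minus_in f kcomb_in)
  thus ?thesis by blast
qed

lemma hdist_span_x:
  assumes f: "f \<in> H" and orth: "\<forall>d. ip (f - kcomb c) (kcomb d) = 0"
  shows "(hdist ip f (fspan n (\<lambda>j. K (x j))))\<^sup>2 \<le> nsq f - nsq (kcomb c)"
proof -
  have "hdist ip f (fspan n (\<lambda>j. K (x j))) \<le> sqrt (nsq (f - kcomb c))"
    using hdist_le[OF kcomb_in_span span_x_sub f] by (simp add: hnorm_nsq)
  hence "(hdist ip f (fspan n (\<lambda>j. K (x j))))\<^sup>2 \<le> nsq (f - kcomb c)"
    using hdist_nonneg[OF span_x_ne span_x_sub f] nsq_nonneg[OF minus_in[OF f kcomb_in]]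
    by (metis power_mono real_sqrt_pow2)
  thus ?thesis using pythagoras[OF f kcomb_in, of c] orth by simp
qed

text \<open>Since E is nonsingular, the Fourier coefficients of elements of S_X can be
  prescribed arbitrarily, and they determine the element.\<close>
lemma kcomb_coeffs_surj: "\<exists>c. \<forall>l<n. ip (kcomb c) (e l) = a l"
proof -
  obtain d where d: "\<forall>l<n. (\<Sum>j<n. e l (x j) * d j) = cnj (a l)"
    using nonsingular_system_solvable[OF det_eval_matrix_transposed, of "\<lambda>l. cnj (a l)"] by blast
  have "ip (kcomb (\<lambda>j. cnj (d j))) (e l) = a l" if "l < n" for l
  proof -
    have "ip (kcomb (\<lambda>j. cnj (d j))) (e l) = cnj (\<Sum>j<n. e l (x j) * d j)"
      using that by (simp add: ip_kcomb_e mult.commute)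
    thus ?thesis using d that by simp
  qed
  thus ?thesis by blast
qed

lemma kcomb_coeffs_inj:
  assumes "\<forall>l<n. ip (kcomb c) (e l) = 0" shows "\<forall>j<n. c j = 0"
proof -
  have "(\<Sum>j<n. e l (x j) * cnj (c j)) = cnj (ip (kcomb c) (e l))" if "l < n" for l
    using that by (simp add: ip_kcomb_e mult.commute)
  hence "\<forall>l<n. (\<Sum>j<n. e l (x j) * cnj (c j)) = 0" using assms by simp
  from nonsingular_system_injective[OF det_eval_matrix_transposed this] show ?thesis by simp
qed

end


context interpolation_setting
begin

definition rayleigh_form :: "real \<Rightarrow> ('a \<Rightarrow> complex) \<Rightarrow> ('a \<Rightarrow> complex) \<Rightarrow> complex" where
  "rayleigh_form r f g = of_real r * ip (proj f) g - ip f g"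

lemma rayleigh_form_sym:
  assumes "f \<in> H" "g \<in> H" shows "rayleigh_form r g f = cnj (rayleigh_form r f g)"
proof -
  have "ip (proj g) f = cnj (ip (proj f) g)"
    unfolding ip_proj_left[OF assms(1)] ip_proj_left[OF assms(2)] by (simp add: mult.commute)
  thus ?thesis unfolding rayleigh_form_def using ip_sym[OF assms] by simp
qed

lemma rayleigh_form_lin:
  assumes f: "f \<in> H" and g: "g \<in> H"
  shows "rayleigh_form r (lin f a g) (lin f a g) = rayleigh_form r f f + cnj a * rayleigh_form r f g
           + a * rayleigh_form r g f + a * cnj a * rayleigh_form r g g"
  unfolding rayleigh_form_def proj_lin[OF f g] using f g proj_in[of f] proj_in[of g]
  by (simp add: ip_lin ip_lin_r lin_in algebra_simps)

lemma Re_rayleigh_form: "h \<in> H \<Longrightarrow> Re (rayleigh_form r h h) = r * bessel h - nsq h"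
  unfolding rayleigh_form_def nsq_def using Re_ip_proj by simp

lemma rayleigh_attained:
  "\<exists>c0 r. (\<exists>j<n. c0 j \<noteq> 0) \<and> nsq (kcomb c0) = r * bessel (kcomb c0)
     \<and> (\<forall>c. nsq (kcomb c) \<le> r * bessel (kcomb c))"
proof (rule rayleigh_max[OF n_pos])
  have nsq_formula: "nsq (kcomb c) = Re (\<Sum>j<n. c j * (\<Sum>k<n. cnj (c k) * K (x j) (x k)))" for c
    by (simp add: nsq_def ip_kcomb[OF kcomb_in] ip_kcomb_r[OF K_in] ip_K_K)
  have bessel_formula: "bessel (kcomb c) = (\<Sum>l<n. (cmod (\<Sum>j<n. c j * cnj (e l (x j))))\<^sup>2)" for c
    unfolding bessel_def by (rule sum.cong) (simp_all add: ip_kcomb_e)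
  show "continuous_on UNIV (\<lambda>c. nsq (kcomb c))"
    unfolding nsq_formula by (intro continuous_intros)
  show "continuous_on UNIV (\<lambda>c. bessel (kcomb c))"
    unfolding bessel_formula by (intro continuous_intros)
  show "0 < bessel (kcomb c)" if "\<exists>j<n. c j \<noteq> 0" for c
  proof (rule ccontr)
    assume "\<not> 0 < bessel (kcomb c)"
    hence "bessel (kcomb c) = 0" using bessel_nonneg[of "kcomb c"] by simp
    hence "\<forall>l<n. ip (kcomb c) (e l) = 0"
      unfolding bessel_def by (subst (asm) sum_nonneg_eq_0_iff) auto
    thus False using kcomb_coeffs_inj that by blast
  qed
  show "nsq (kcomb (\<lambda>j. of_real t * c j)) = t\<^sup>2 * nsq (kcomb c)" for c t
  proof -
    have "(\<Sum>j<n. of_real t * c j * (\<Sum>k<n. cnj (of_real t * c k) * K (x j) (x k)))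
        = of_real (t\<^sup>2) * (\<Sum>j<n. c j * (\<Sum>k<n. cnj (c k) * K (x j) (x k)))"
      by (simp add: sum_distrib_left power2_eq_square algebra_simps)
    thus ?thesis unfolding nsq_formula by simp
  qed
  show "bessel (kcomb (\<lambda>j. of_real t * c j)) = t\<^sup>2 * bessel (kcomb c)" for c t
  proof -
    have "(cmod (\<Sum>j<n. of_real t * c j * cnj (e l (x j))))\<^sup>2
        = t\<^sup>2 * (cmod (\<Sum>j<n. c j * cnj (e l (x j))))\<^sup>2" for l
    proof -
      have "(\<Sum>j<n. of_real t * c j * cnj (e l (x j))) = of_real t * (\<Sum>j<n. c j * cnj (e l (x j)))"
        by (simp add: sum_distrib_left mult.assoc)
      thus ?thesis by (simp add: norm_mult power_mult_distrib)
    qed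
    thus ?thesis unfolding bessel_formula by (simp add: sum_distrib_left)
  qed
  show "nsq (kcomb c) = nsq (kcomb (\<lambda>j. if j < n then c j else 0))" for c
    unfolding nsq_formula by (intro arg_cong[where f = Re] sum.cong refl) auto
  show "bessel (kcomb c) = bessel (kcomb (\<lambda>j. if j < n then c j else 0))" for c
    unfolding bessel_formula by (intro sum.cong refl arg_cong[where f = "\<lambda>u. (cmod u)\<^sup>2"]) auto
qed

text \<open>First variation at a maximiser w0: the form vanishes on w0 x S_X, and testing against
  the kernel translates gives the interpolation identity w0(x_i) = r (P w0)(x_i).\<close>
lemma maximiser_interpolation:
  assumes le: "\<forall>c. nsq (kcomb c) \<le> r * bessel (kcomb c)"
    and eq: "nsq (kcomb c0) = r * bessel (kcomb c0)"
    and i: "i < n"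
  shows "kcomb c0 (x i) = of_real r * proj (kcomb c0) (x i)"
proof -
  let ?w0 = "kcomb c0" and ?wd = "kcomb (\<lambda>j. if j = i then 1 else 0)"
  let ?X = "rayleigh_form r ?w0 ?wd" and ?q = "Re (rayleigh_form r ?wd ?wd)"
  have "0 \<le> Re (cnj a * ?X + a * cnj ?X) + (cmod a)\<^sup>2 * ?q" for a
  proof -
    define d where "d = (\<lambda>j. c0 j + a * (if j = i then 1 else 0))"
    have "kcomb d = lin ?w0 a ?wd" unfolding d_def by (rule kcomb_lin)
    hence expand: "rayleigh_form r (kcomb d) (kcomb d) = rayleigh_form r ?w0 ?w0
        + (cnj a * ?X + a * cnj ?X) + a * cnj a * rayleigh_form r ?wd ?wd"
      using rayleigh_form_lin[OF kcomb_in kcomb_in, of r c0 a]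
        rayleigh_form_sym[OF kcomb_in kcomb_in, of r "\<lambda>j. if j = i then 1 else 0" c0]
      by (simp only: add.assoc)
    have "0 \<le> Re (rayleigh_form r (kcomb d) (kcomb d))"
      using le[rule_format, of d] by (simp add: Re_rayleigh_form[OF kcomb_in])
    moreover have "Re (rayleigh_form r ?w0 ?w0) = 0"
      using eq by (simp add: Re_rayleigh_form[OF kcomb_in])
    moreover have "Re (a * cnj a * rayleigh_form r ?wd ?wd) = (cmod a)\<^sup>2 * ?q"
      by (simp only: complex_norm_square[symmetric]) simp
    ultimately show ?thesis unfolding expand plus_complex.sel by linarith
  qed
  hence "?X = 0" by (rule nonneg_quadratic_imp_zero)
  hence "of_real r * ip (proj ?w0) (K (x i)) = ip ?w0 (K (x i))"
    using kcomb_unit[OF i] by (simp add: rayleigh_form_def)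
  thus ?thesis by (simp add: repr[OF proj_in, symmetric] repr[OF kcomb_in, symmetric])
qed

end


section \<open>The matrix K[X]^T (E E^H)^{-1} and its largest eigenvalue\<close>

context interpolation_setting
begin

definition Gm :: "complex mat" where "Gm = mat n n (\<lambda>(j, k). K (x j) (x k))"
definition Em :: "complex mat" where "Em = mat n n (\<lambda>(j, k). e k (x j))"
definition Pm :: "complex mat" where "Pm = Em * mat_adjoint Em"
definition Mm :: "complex mat" where "Mm = transpose_mat Gm * mat_inv Pm"

definition lam :: real where "lam = lambda_max Mm"

lemma Em_carrier: "Em \<in> carrier_mat n n" by (simp add: Em_def)
lemma Gm_carrier: "Gm \<in> carrier_mat n n" by (simp add: Gm_def)
lemma Pm_carrier: "Pm \<in> carrier_mat n n"
  unfolding Pm_def by (rule mult_carrier_mat[OF Em_carrier adjoint_carrier[OF Em_carrier]])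

lemma Pm_inverse: "mat_inv Pm \<in> carrier_mat n n \<and> mat_inv Pm * Pm = 1\<^sub>m n"
proof -
  have "det Em \<noteq> 0" using Edet by (simp add: Em_def)
  hence "det Pm \<noteq> 0" unfolding Pm_def by (rule det_mult_adjoint_nonzero[OF Em_carrier])
  thus ?thesis using mat_inv_inverse[OF Pm_carrier] by blast
qed

lemma Mm_carrier: "Mm \<in> carrier_mat n n"
  using Pm_inverse Gm_carrier by (simp add: Mm_def)

lemma Gm_transpose_apply: "i < n \<Longrightarrow> (transpose_mat Gm *\<^sub>v vec n c) $ i = kcomb c (x i)"
  by (simp add: Gm_def kcomb_def scalar_prod_def lessThan_atLeast0 mult.commute)

lemma Pm_apply: assumes i: "i < n" shows "(Pm *\<^sub>v vec n c) $ i = proj (kcomb c) (x i)"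
proof -
  have adj: "(mat_adjoint Em *\<^sub>v vec n c) $ l = ip (kcomb c) (e l)" if "l < n" for l
    using adjoint_mult_vec_index[OF Em_carrier _ that, of "vec n c"] that
    by (simp add: Em_def ip_kcomb_e mult.commute)
  have "(Pm *\<^sub>v vec n c) $ i = (Em *\<^sub>v (mat_adjoint Em *\<^sub>v vec n c)) $ i"
    unfolding Pm_def using Em_carrier adjoint_carrier[OF Em_carrier] by simp
  also have "\<dots> = (\<Sum>l<n. e l (x i) * (mat_adjoint Em *\<^sub>v vec n c) $ l)"
    using i adjoint_carrier[OF Em_carrier] by (simp add: Em_def scalar_prod_def lessThan_atLeast0)
  also have "\<dots> = proj (kcomb c) (x i)"
    unfolding proj_def by (rule sum.cong) (simp_all add: adj mult.commute)
  finally show ?thesis .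
qed

text \<open>The maximal Rayleigh quotient is a (real) eigenvalue of K[X]^T (E E^H)^{-1}: for a
  maximiser c0 the vector (E E^H) c0 is an eigenvector.\<close>
lemma rayleigh_eigenvalue:
  "\<exists>r. eigenvalue Mm (of_real r) \<and> (\<forall>c. nsq (kcomb c) \<le> r * bessel (kcomb c))"
proof -
  obtain c0 r where nz: "\<exists>j<n. c0 j \<noteq> 0" and eq: "nsq (kcomb c0) = r * bessel (kcomb c0)"
    and le: "\<forall>c. nsq (kcomb c) \<le> r * bessel (kcomb c)" using rayleigh_attained by blast
  define y where "y = Pm *\<^sub>v vec n c0"
  have y: "y \<in> carrier_vec n" using Pm_carrier by (simp add: y_def)
  have Gt: "transpose_mat Gm *\<^sub>v vec n c0 = of_real r \<cdot>\<^sub>v y"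
  proof (rule eq_vecI)
    fix i assume "i < dim_vec (of_real r \<cdot>\<^sub>v y)"
    hence i: "i < n" using y by simp
    have "(transpose_mat Gm *\<^sub>v vec n c0) $ i = kcomb c0 (x i)" by (rule Gm_transpose_apply[OF i])
    also have "\<dots> = of_real r * y $ i"
      unfolding y_def Pm_apply[OF i] by (rule maximiser_interpolation[OF le eq i])
    finally show "(transpose_mat Gm *\<^sub>v vec n c0) $ i = (of_real r \<cdot>\<^sub>v y) $ i" using i y by simp
  qed (use y Gm_carrier in simp)
  have "mat_inv Pm *\<^sub>v y = (mat_inv Pm * Pm) *\<^sub>v vec n c0" unfolding y_def
    by (rule assoc_mult_mat_vec[of _ n n _ n, symmetric]) (use Pm_inverse Pm_carrier in auto)
  hence "mat_inv Pm *\<^sub>v y = vec n c0" using Pm_inverse by simp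
  moreover have "Mm *\<^sub>v y = transpose_mat Gm *\<^sub>v (mat_inv Pm *\<^sub>v y)" unfolding Mm_def
    by (rule assoc_mult_mat_vec[of _ n n _ n]) (use Pm_inverse Gm_carrier y in auto)
  ultimately have My: "Mm *\<^sub>v y = of_real r \<cdot>\<^sub>v y" using Gt by simp
  have "y \<noteq> 0\<^sub>v n"
  proof
    assume "y = 0\<^sub>v n"
    hence "(transpose_mat Gm *\<^sub>v vec n c0) $ i = 0" if "i < n" for i using Gt that by simp
    hence "\<forall>i<n. (\<Sum>j<n. K (x j) (x i) * c0 j) = 0"
      by (simp add: Gm_transpose_apply kcomb_def mult.commute)
    from nonsingular_system_injective[OF det_kernel_matrix_transposed this] show False using nz by blast
  qed
  hence "eigenvector Mm y (of_real r)" unfolding eigenvector_def using y My Mm_carrier by simp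
  thus ?thesis using le unfolding eigenvalue_def by blast
qed

lemma rayleigh_bound: "nsq (kcomb c) \<le> lam * bessel (kcomb c)"
proof -
  obtain r where r: "eigenvalue Mm (of_real r)" and le: "\<forall>c. nsq (kcomb c) \<le> r * bessel (kcomb c)"
    using rayleigh_eigenvalue by blast
  have "r \<le> lam" unfolding lam_def by (rule eigenvalue_le_lambda_max[OF Mm_carrier r])
  hence "r * bessel (kcomb c) \<le> lam * bessel (kcomb c)" using bessel_nonneg by (simp add: mult_right_mono)
  thus ?thesis using le by (meson order_trans)
qed

text \<open>Testing the Rayleigh bound on an element of S_X with P w = e_0 (Bessel sum 1) shows \<lambda> \<ge> 1.\<close>
lemma lam_ge_1: "1 \<le> lam"
proof -
  obtain c where c: "\<forall>l<n. ip (kcomb c) (e l) = (if l = 0 then 1 else 0)"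
    using kcomb_coeffs_surj[of "\<lambda>l. if l = 0 then 1 else 0"] by blast
  have "bessel (kcomb c) = (\<Sum>l<n. if l = 0 then 1 else 0)"
    unfolding bessel_def by (rule sum.cong) (simp_all add: c)
  hence b1: "bessel (kcomb c) = 1" using n_pos by simp
  have "1 \<le> nsq (kcomb c)" using bessel_le_nsq[OF kcomb_in, of c] b1 by simp
  also have "\<dots> \<le> lam" using rayleigh_bound[of c] b1 by simp
  finally show ?thesis .
qed

end


section \<open>The pointwise estimate\<close>

lemma le_from_quadratic:
  fixes a N l :: real
  assumes q: "a\<^sup>2 \<le> (N - a) * ((l - 1) * a)" and l: "1 \<le> l" and a: "0 \<le> a" "a \<le> N"
  shows "a \<le> (1 - 1 / l) * N"
proof (cases "a = 0")
  case True
  have "0 \<le> 1 - 1 / l" using l by simp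
  thus ?thesis using True a by simp
next
  case False
  hence "a * a \<le> ((N - a) * (l - 1)) * a" using q by (simp add: power2_eq_square algebra_simps)
  hence "a \<le> (N - a) * (l - 1)" using False a by simp
  hence "a * l \<le> (l - 1) * N" by (simp add: algebra_simps)
  thus ?thesis using l by (simp add: field_simps)
qed

lemma square_mix_bound:
  fixes A B s :: real
  assumes "0 \<le> s" "s \<le> 1"
  shows "(A + s * B)\<^sup>2 \<le> A\<^sup>2 + 2 * s * (A\<^sup>2 + B\<^sup>2)"
proof -
  have "s * (2 * A * B) \<le> s * (A\<^sup>2 + B\<^sup>2)"
    using assms(1) sum_squares_bound[of A B] by (rule mult_left_mono[rotated])
  moreover have "s\<^sup>2 * B\<^sup>2 \<le> s * B\<^sup>2"
    using assms by (simp add: power2_eq_square mult_right_mono mult_left_le_one_le)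
  moreover have "s * B\<^sup>2 \<le> s * (A\<^sup>2 + B\<^sup>2)" using assms(1) by (simp add: mult_left_mono)
  ultimately show ?thesis by (simp add: power2_eq_square algebra_simps)
qed

context orthonormal_system
begin

lemma bessel_sqrt_subadd:
  "f \<in> H \<Longrightarrow> g \<in> H \<Longrightarrow> sqrt (bessel (lin f 1 g)) \<le> sqrt (bessel f) + sqrt (bessel g)"
  using triangle[OF proj_in proj_in, of f g] by (simp add: proj_lin nsq_proj[symmetric])

lemma cross_term:
  assumes z: "z \<in> H" and w: "w \<in> H" and zw: "ip z w = 0" and pw: "proj w = proj z"
  shows "ip (z - proj z) (w - proj z) = - ip (proj z) (proj z)"
proof -
  let ?u = "proj z"
  have orth: "ip (f - proj f) (proj f) = 0" if "f \<in> H" for f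
    using proj_orth[OF that, of "\<lambda>l. ip f (e l)"] by (simp add: proj_def)
  have "ip ?u (w - ?u) = 0"
    using ip_sym[OF minus_in[OF w proj_in] proj_in] orth[OF w] pw by simp
  moreover have "ip z ?u = ip ?u ?u" using orth[OF z] by (simp add: ip_minus z proj_in)
  ultimately show ?thesis by (simp add: ip_minus ip_minus_r z w proj_in minus_in zw)
qed

end

context interpolation_setting
begin

lemma orth_span_x_bessel:
  assumes z: "z \<in> H" and orth: "\<forall>d. ip z (kcomb d) = 0"
  shows "bessel z \<le> (1 - 1 / lam) * nsq z"
proof -
  let ?u = "proj z" and ?a = "bessel z"
  obtain c where c: "\<forall>l<n. ip (kcomb c) (e l) = ip z (e l)"
    using kcomb_coeffs_surj[of "\<lambda>l. ip z (e l)"] by blast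
  let ?w = "kcomb c"
  have pw: "proj ?w = ?u" unfolding proj_def by (intro ext sum.cong) (auto simp: c)
  have bw: "bessel ?w = ?a" unfolding bessel_def by (rule sum.cong) (auto simp: c)
  have wu: "nsq (?w - ?u) \<le> (lam - 1) * ?a"
    using nsq_split[OF kcomb_in, of c] rayleigh_bound[of c] pw bw by (simp add: algebra_simps)
  have zu: "nsq (z - ?u) = nsq z - ?a" using nsq_split[OF z] by simp
  have "?a = Re (ip ?u ?u)" using nsq_proj[of z] by (simp add: nsq_def)
  also have "\<dots> \<le> cmod (ip (z - ?u) (?w - ?u))"
    using cross_term[OF z kcomb_in _ pw] orth by (simp add: abs_le_D1 abs_Re_le_cmod)
  finally have "?a\<^sup>2 \<le> (cmod (ip (z - ?u) (?w - ?u)))\<^sup>2" using bessel_nonneg by (simp add: power_mono)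
  also have "\<dots> \<le> nsq (z - ?u) * nsq (?w - ?u)"
    using cauchy_schwarz[OF minus_in[OF z proj_in] minus_in[OF kcomb_in proj_in]] by (simp add: nsq_def)
  also have "\<dots> \<le> (nsq z - ?a) * ((lam - 1) * ?a)"
    using mult_left_mono[OF wu, of "nsq z - ?a"] zu nsq_nonneg[OF minus_in[OF z proj_in[of z]]] by simp
  finally have "?a\<^sup>2 \<le> (nsq z - ?a) * ((lam - 1) * ?a)" .
  thus ?thesis by (rule le_from_quadratic[OF _ lam_ge_1 bessel_nonneg bessel_le_nsq[OF z]])
qed

lemma pointwise_estimate:
  assumes k: "k \<in> H"
  shows "(hdist ip k (fspan n (\<lambda>j. K (x j))))\<^sup>2 - (hdist ip k (fspan n e))\<^sup>2
         \<le> 2 * sqrt (1 - 1 / lam) * nsq k"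
proof -
  obtain c where orth: "\<forall>d. ip (k - kcomb c) (kcomb d) = 0" using proj_span_x_exists[OF k] by blast
  let ?v = "kcomb c" and ?s = "sqrt (1 - 1 / lam)"
  define z where "z = k - ?v"
  have zH: "z \<in> H" by (simp add: z_def minus_in k kcomb_in)
  have split: "nsq k = nsq z + nsq ?v" using pythagoras[OF k kcomb_in] orth by (simp add: z_def)
  have s: "0 \<le> ?s" "?s \<le> 1" "?s\<^sup>2 = 1 - 1 / lam" using lam_ge_1 by auto
  have "sqrt (bessel k) \<le> sqrt (bessel ?v) + sqrt (bessel z)"
    using bessel_sqrt_subadd[OF kcomb_in zH, of c] by (simp add: z_def lin_def)
  moreover have "sqrt (bessel ?v) \<le> sqrt (nsq ?v)" using bessel_le_nsq[OF kcomb_in] by simp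
  moreover have "sqrt (bessel z) \<le> ?s * sqrt (nsq z)"
  proof -
    have "bessel z \<le> ?s\<^sup>2 * nsq z" using orth_span_x_bessel[OF zH] orth s(3) by (simp add: z_def)
    hence "sqrt (bessel z) \<le> sqrt (?s\<^sup>2 * nsq z)" by (rule real_sqrt_le_mono)
    thus ?thesis using s(1) by (simp add: real_sqrt_mult)
  qed
  ultimately have "sqrt (bessel k) \<le> sqrt (nsq ?v) + ?s * sqrt (nsq z)" by linarith
  hence "(sqrt (bessel k))\<^sup>2 \<le> (sqrt (nsq ?v) + ?s * sqrt (nsq z))\<^sup>2"
    by (rule power_mono) (simp add: bessel_nonneg)
  hence "bessel k \<le> (sqrt (nsq ?v) + ?s * sqrt (nsq z))\<^sup>2" using bessel_nonneg[of k] by simp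
  also have "\<dots> \<le> nsq ?v + 2 * ?s * nsq k"
    using square_mix_bound[OF s(1,2), of "sqrt (nsq ?v)" "sqrt (nsq z)"]
      nsq_nonneg[OF kcomb_in] nsq_nonneg[OF zH] split by (simp add: add.commute)
  finally show ?thesis
    using hdist_span_x[OF k orth] hdist_span_e[OF k] by simp
qed

end


section \<open>Integration over \<Omega>\<close>

lemma integrable_continuous_compact:
  fixes f :: "'a::metric_space \<Rightarrow> real"
  assumes fm: "finite_measure \<mu>" and ms: "sets \<mu> = sets (restrict_space borel \<Omega>)"
    and cp: "compact \<Omega>" and cf: "continuous_on \<Omega> f"
  shows "integrable \<mu> f"
proof -
  have sp: "space \<mu> = \<Omega>" using sets_eq_imp_space_eq[OF ms] by (simp add: space_restrict_space)
  have meas: "f \<in> borel_measurable \<mu>"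
    by (subst measurable_cong_sets[OF ms refl]) (rule borel_measurable_continuous_on_restrict[OF cf])
  have "bounded (f ` \<Omega>)" using compact_continuous_image[OF cf cp] compact_imp_bounded by blast
  then obtain B where B: "\<forall>t\<in>\<Omega>. norm (f t) \<le> B" by (auto simp: bounded_iff)
  show ?thesis
    by (rule finite_measure.integrable_const_bound[OF fm, of f B]) (use B sp meas in \<open>auto intro!: AE_I2\<close>)
qed

lemma continuous_on_kernel_compose:
  fixes K :: "'a::metric_space \<Rightarrow> 'a \<Rightarrow> complex"
  assumes Kc: "continuous_on (\<Omega> \<times> \<Omega>) (\<lambda>(s, t). K s t)"
    and a: "continuous_on \<Omega> a" and b: "continuous_on \<Omega> b" and ab: "\<forall>s\<in>\<Omega>. a s \<in> \<Omega> \<and> b s \<in> \<Omega>"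
  shows "continuous_on \<Omega> (\<lambda>s. K (a s) (b s))"
  using continuous_on_compose2[OF Kc continuous_on_Pair[OF a b]] ab by auto

text \<open>For a continuous kernel, t \<mapsto> K(t,.) is continuous into H because
  ||K(s,.) - K(t,.)||^2 = K(s,s) - K(s,t) - K(t,s) + K(t,t); as the distance to V is
  1-Lipschitz, t \<mapsto> dist(K(t,.), V) is continuous.\<close>
lemma hdist_kernel_continuous:
  fixes K :: "'a::metric_space \<Rightarrow> 'a \<Rightarrow> complex"
  assumes "rkhs_space K H ip"
    and Kc: "continuous_on (\<Omega> \<times> \<Omega>) (\<lambda>(s, t). K s t)" and V: "V \<noteq> {}" "V \<subseteq> H"
  shows "continuous_on \<Omega> (\<lambda>t. hdist ip (K t) V)"
  unfolding continuous_on_iff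
proof (intro ballI allI impI)
  interpret rkhs_space K H ip by fact
  fix t \<epsilon> assume t: "t \<in> \<Omega>" and \<epsilon>: "(0::real) < \<epsilon>"
  define \<phi> where "\<phi> s = Re (K s s - K s t - K t s + K t t)" for s
  have "continuous_on \<Omega> (\<lambda>s. sqrt (\<phi> s))" unfolding \<phi>_def
    using t by (intro continuous_intros continuous_on_kernel_compose[OF Kc]) auto
  then obtain d where d: "d > 0" "\<forall>s\<in>\<Omega>. dist s t < d \<longrightarrow> dist (sqrt (\<phi> s)) (sqrt (\<phi> t)) < \<epsilon>"
    using t \<epsilon> unfolding continuous_on_iff by blast
  have "dist (hdist ip (K s) V) (hdist ip (K t) V) < \<epsilon>" if s: "s \<in> \<Omega>" "dist s t < d" for s
  proof -
    have "hnorm ip (K s - K t) = sqrt (\<phi> s)" "hnorm ip (K t - K s) = sqrt (\<phi> s)"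
      by (simp_all add: hnorm_nsq nsq_K_diff \<phi>_def algebra_simps)
    hence "hdist ip (K s) V \<le> sqrt (\<phi> s) + hdist ip (K t) V"
      "hdist ip (K t) V \<le> sqrt (\<phi> s) + hdist ip (K s) V"
      using hdist_lipschitz[OF V K_in K_in, of s t] hdist_lipschitz[OF V K_in K_in, of t s] by simp_all
    moreover have "\<bar>sqrt (\<phi> s)\<bar> < \<epsilon>" using d(2) s by (simp add: \<phi>_def dist_real_def)
    ultimately show ?thesis by (simp add: dist_real_def abs_le_iff abs_less_iff)
  qed
  thus "\<exists>d>0. \<forall>s\<in>\<Omega>. dist s t < d \<longrightarrow> dist (hdist ip (K s) V) (hdist ip (K t) V) < \<epsilon>"
    using d(1) by blast
qed

theorem theorem4p3:
  fixes K :: "'a::metric_space \<Rightarrow> 'a \<Rightarrow> complex"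
    and H :: "('a \<Rightarrow> complex) set"
    and ip :: "('a \<Rightarrow> complex) \<Rightarrow> ('a \<Rightarrow> complex) \<Rightarrow> complex"
    and \<Omega> :: "'a set" and \<mu> :: "'a measure"
    and n :: nat and e :: "nat \<Rightarrow> 'a \<Rightarrow> complex" and lam :: "nat \<Rightarrow> real"
    and x :: "nat \<Rightarrow> 'a"
  assumes rkhs: "is_rkhs K H ip"
    and cpt: "compact \<Omega>"
    and Kcont: "continuous_on (\<Omega> \<times> \<Omega>) (\<lambda>(s, t). K s t)"
    and mu_sets: "sets \<mu> = sets (restrict_space borel \<Omega>)"
    and mu_fin: "finite_measure \<mu>"
    and n_pos: "0 < n"
    and e_in: "\<forall>k<n. e k \<in> H"
    and e_orth: "\<forall>j<n. \<forall>k<n. ip (e j) (e k) = (if j = k then 1 else 0)"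
    and e_eig: "\<forall>k<n. \<forall>y. intop \<mu> K (e k) y = complex_of_real (lam k) * e k y"
    and lam_pos: "\<forall>k<n. 0 < lam k"
    and lam_largest: "\<forall>f\<in>H. \<forall>c::real. f \<noteq> (\<lambda>_. 0) \<and> (\<forall>y. intop \<mu> K f y = complex_of_real c * f y)
                        \<and> (\<forall>k<n. ip f (e k) = 0) \<longrightarrow> (\<forall>k<n. c \<le> lam k)"
    and KX_nonsing: "det (mat n n (\<lambda>(j, k). K (x j) (x k))) \<noteq> 0"
    and B_nonsing: "det (mat n n (\<lambda>(j, k).
           let h = (\<lambda>i. \<lambda>y. K (x i) y - (\<Sum>l<n. cnj (e l (x i)) * e l y)) in ip (h k) (h j))) \<noteq> 0"
    and E_nonsing: "det (mat n n (\<lambda>(j, k). e k (x j))) \<noteq> 0"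
  shows "approx_err \<mu> K ip (fspan n (\<lambda>j. K (x j))) - approx_err \<mu> K ip (fspan n e)
         \<le> 2 * (\<integral>t. Re (K t t) \<partial>\<mu>) *
            sqrt (1 - 1 / lambda_max (transpose_mat (mat n n (\<lambda>(j, k). K (x j) (x k)))
                   * mat_inv (mat n n (\<lambda>(j, k). e k (x j)) * mat_adjoint (mat n n (\<lambda>(j, k). e k (x j))))))"
proof -
  interpret S: interpolation_setting K H ip n e x
    using rkhs n_pos e_in e_orth KX_nonsing E_nonsing by unfold_locales auto
  let ?s = "sqrt (1 - 1 / S.lam)"
  let ?d = "\<lambda>V t. (hdist ip (K t) V)\<^sup>2"
  have int_d: "integrable \<mu> (?d V)" if "V \<noteq> {}" "V \<subseteq> H" for V
    by (intro integrable_continuous_compact[OF mu_fin mu_sets cpt] continuous_intros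
        hdist_kernel_continuous[OF S.rkhs_space_axioms Kcont that])
  have int_diag: "integrable \<mu> (\<lambda>t. Re (K t t))"
    by (intro integrable_continuous_compact[OF mu_fin mu_sets cpt] continuous_intros
        continuous_on_kernel_compose[OF Kcont]) auto
  have "approx_err \<mu> K ip (fspan n (\<lambda>j. K (x j))) - approx_err \<mu> K ip (fspan n e)
        = (\<integral>t. ?d (fspan n (\<lambda>j. K (x j))) t - ?d (fspan n e) t \<partial>\<mu>)"
    unfolding approx_err_def
    by (rule Bochner_Integration.integral_diff[symmetric])
      (simp_all add: int_d S.span_x_ne S.span_x_sub S.span_e_ne S.span_e_sub)
  also have "\<dots> \<le> (\<integral>t. 2 * ?s * Re (K t t) \<partial>\<mu>)"
    using S.pointwise_estimate[OF S.K_in] int_d int_diag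
    by (intro Bochner_Integration.integral_mono)
      (simp_all add: S.nsq_K S.span_x_ne S.span_x_sub S.span_e_ne S.span_e_sub)
  finally show ?thesis by (simp add: S.lam_def S.Mm_def S.Gm_def S.Pm_def S.Em_def mult_ac)
qed

end
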